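(* Let $R$ be a left hereditary ring, $M$ a projective left $R$-module and $N$ a submodule of $M$. Then $\beta(N)\subseteq\langle E_N(0)\rangle\subseteq\beta_{co}(N)$, where $N$ is regarded as an $R$-module.
   Context: Rings are associative with identity; modules are unital left modules. $R$ is left hereditary if every submodule of a projective left $R$-module is projective. For a module $X$: a submodule $P$ is prime if $RX\not\subseteq P$ and for every ideal $A$ of $R$ and submodule $K$ with $AK\subseteq P$, $K\subseteq P$ or $AX\subseteq P$; completely prime if $RX\not\subseteq P$ and $rx\in P$ implies $x\in P$ or $rX\subseteq P$. $\beta(X)$ (resp. $\beta_{co}(X)$) is the intersection of all prime (resp. completely prime) submodules of $X$ ($=X$ if none). $E_X(0)=\{rx: r\in R, x\in X, r^kx=0\text{ for some }k\in\mathbb N\}$, $\langle E_X(0)\rangle$ the submodule generated. *)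

theory Defs
  imports "HOL-Algebra.Algebra"
begin

text \<open>HOL-Algebra's module locale requires a commutative ring, so unital left
modules over an arbitrary ring are defined here, reusing the module record.\<close>

definition lmodule :: "'r ring \<Rightarrow> ('r, 'm) module \<Rightarrow> bool" where
  "lmodule R M \<longleftrightarrow> ring R \<and> abelian_group M \<and>
     (\<forall>a \<in> carrier R. \<forall>x \<in> carrier M. a \<odot>\<^bsub>M\<^esub> x \<in> carrier M) \<and>
     (\<forall>a \<in> carrier R. \<forall>b \<in> carrier R. \<forall>x \<in> carrier M.
        (a \<oplus>\<^bsub>R\<^esub> b) \<odot>\<^bsub>M\<^esub> x = (a \<odot>\<^bsub>M\<^esub> x) \<oplus>\<^bsub>M\<^esub> (b \<odot>\<^bsub>M\<^esub> x)) \<and>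
     (\<forall>a \<in> carrier R. \<forall>x \<in> carrier M. \<forall>y \<in> carrier M.
        a \<odot>\<^bsub>M\<^esub> (x \<oplus>\<^bsub>M\<^esub> y) = (a \<odot>\<^bsub>M\<^esub> x) \<oplus>\<^bsub>M\<^esub> (a \<odot>\<^bsub>M\<^esub> y)) \<and>
     (\<forall>a \<in> carrier R. \<forall>b \<in> carrier R. \<forall>x \<in> carrier M.
        (a \<otimes>\<^bsub>R\<^esub> b) \<odot>\<^bsub>M\<^esub> x = a \<odot>\<^bsub>M\<^esub> (b \<odot>\<^bsub>M\<^esub> x)) \<and>
     (\<forall>x \<in> carrier M. \<one>\<^bsub>R\<^esub> \<odot>\<^bsub>M\<^esub> x = x)"

text \<open>Submodules (as subsets of the carrier); a submodule \<open>N\<close> regarded as a module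
is \<open>M\<lparr>carrier := N\<rparr>\<close>.\<close>

definition lsubmodule :: "'r ring \<Rightarrow> 'm set \<Rightarrow> ('r, 'm) module \<Rightarrow> bool" where
  "lsubmodule R N M \<longleftrightarrow> N \<subseteq> carrier M \<and> \<zero>\<^bsub>M\<^esub> \<in> N \<and>
     (\<forall>x \<in> N. \<forall>y \<in> N. x \<oplus>\<^bsub>M\<^esub> y \<in> N) \<and>
     (\<forall>x \<in> N. \<ominus>\<^bsub>M\<^esub> x \<in> N) \<and>
     (\<forall>a \<in> carrier R. \<forall>x \<in> N. a \<odot>\<^bsub>M\<^esub> x \<in> N)"

definition lmod_hom :: "'r ring \<Rightarrow> ('r, 'm) module \<Rightarrow> ('r, 'n) module \<Rightarrow> ('m \<Rightarrow> 'n) \<Rightarrow> bool" where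
  "lmod_hom R M M' f \<longleftrightarrow> f \<in> carrier M \<rightarrow> carrier M' \<and>
     (\<forall>x \<in> carrier M. \<forall>y \<in> carrier M. f (x \<oplus>\<^bsub>M\<^esub> y) = f x \<oplus>\<^bsub>M'\<^esub> f y) \<and>
     (\<forall>a \<in> carrier R. \<forall>x \<in> carrier M. f (a \<odot>\<^bsub>M\<^esub> x) = a \<odot>\<^bsub>M'\<^esub> f x)"

definition free_lmod :: "'r ring \<Rightarrow> 'i set \<Rightarrow> ('r, 'i \<Rightarrow> 'r) module" where
  "free_lmod R I = \<lparr> partial_object.carrier = {f. (\<forall>i. f i \<in> carrier R) \<and> (\<forall>i. i \<notin> I \<longrightarrow> f i = \<zero>\<^bsub>R\<^esub>)
                                   \<and> finite {i. f i \<noteq> \<zero>\<^bsub>R\<^esub>}},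
                    Group.monoid.mult = (\<lambda>f g i. f i \<otimes>\<^bsub>R\<^esub> g i),
                    Group.monoid.one = (\<lambda>i. \<one>\<^bsub>R\<^esub>),
                    Ring.ring.zero = (\<lambda>i. \<zero>\<^bsub>R\<^esub>),
                    Ring.ring.add = (\<lambda>f g i. f i \<oplus>\<^bsub>R\<^esub> g i),
                    Module.module.smult = (\<lambda>a f i. a \<otimes>\<^bsub>R\<^esub> f i) \<rparr>"

text \<open>Projective: a direct summand (retract) of a free module \<open>R^(I)\<close>.  The index
set is taken in the carrier type of the module (the carrier itself suffices).\<close>

definition projective :: "'r ring \<Rightarrow> ('r, 'm) module \<Rightarrow> bool" where
  "projective R M \<longleftrightarrow> (\<exists>(I :: 'm set) i p.
      lmod_hom R M (free_lmod R I) i \<and> lmod_hom R (free_lmod R I) M p \<and>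
      (\<forall>x \<in> carrier M. p (i x) = x))"

text \<open>Left hereditary: every submodule of a projective left module is projective.
Modules range over those whose carrier lives in the type given by the first
(phantom) argument.\<close>

definition left_hereditary :: "'m itself \<Rightarrow> 'r ring \<Rightarrow> bool" where
  "left_hereditary (T :: 'm itself) R \<longleftrightarrow> ring R \<and>
     (\<forall>(M :: ('r, 'm) module) N. lmodule R M \<and> projective R M \<and> lsubmodule R N M
        \<longrightarrow> projective R (M\<lparr>carrier := N\<rparr>))"

text \<open>\<open>smult_set Y A K = {a k | a \<in> A, k \<in> K}\<close>; for a submodule \<open>P\<close>,
\<open>AK \<subseteq> P\<close> iff \<open>smult_set Y A K \<subseteq> P\<close>.\<close>

definition smult_set :: "('r, 'm) module \<Rightarrow> 'r set \<Rightarrow> 'm set \<Rightarrow> 'm set" where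
  "smult_set Y A K = {Module.module.smult Y a k | a k. a \<in> A \<and> k \<in> K}"

definition prime_submodule :: "'r ring \<Rightarrow> ('r, 'm) module \<Rightarrow> 'm set \<Rightarrow> bool" where
  "prime_submodule R Y P \<longleftrightarrow> lsubmodule R P Y \<and>
     \<not> smult_set Y (carrier R) (carrier Y) \<subseteq> P \<and>
     (\<forall>A K. ideal A R \<and> lsubmodule R K Y \<and> smult_set Y A K \<subseteq> P
        \<longrightarrow> K \<subseteq> P \<or> smult_set Y A (carrier Y) \<subseteq> P)"

definition completely_prime_submodule :: "'r ring \<Rightarrow> ('r, 'm) module \<Rightarrow> 'm set \<Rightarrow> bool" where
  "completely_prime_submodule R Y P \<longleftrightarrow> lsubmodule R P Y \<and>
     \<not> smult_set Y (carrier R) (carrier Y) \<subseteq> P \<and>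
     (\<forall>r \<in> carrier R. \<forall>x \<in> carrier Y. r \<odot>\<^bsub>Y\<^esub> x \<in> P
        \<longrightarrow> x \<in> P \<or> smult_set Y {r} (carrier Y) \<subseteq> P)"

definition prime_radical :: "'r ring \<Rightarrow> ('r, 'm) module \<Rightarrow> 'm set" where
  "prime_radical R Y = (if \<exists>P. prime_submodule R Y P
      then \<Inter> {P. prime_submodule R Y P} else carrier Y)"

definition co_prime_radical :: "'r ring \<Rightarrow> ('r, 'm) module \<Rightarrow> 'm set" where
  "co_prime_radical R Y = (if \<exists>P. completely_prime_submodule R Y P
      then \<Inter> {P. completely_prime_submodule R Y P} else carrier Y)"

definition E_zero :: "'r ring \<Rightarrow> ('r, 'm) module \<Rightarrow> 'm set" where
  "E_zero R Y = {Module.module.smult Y r x | r x. r \<in> carrier R \<and> x \<in> carrier Y \<and>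
                   (\<exists>k::nat. (r [^]\<^bsub>R\<^esub> k) \<odot>\<^bsub>Y\<^esub> x = \<zero>\<^bsub>Y\<^esub>)}"

definition gen_submodule :: "'r ring \<Rightarrow> ('r, 'm) module \<Rightarrow> 'm set \<Rightarrow> 'm set" where
  "gen_submodule R Y S = \<Inter> {K. lsubmodule R K Y \<and> S \<subseteq> K}"

end

theory Submission
  imports Defs
begin

text \<open>Since \<open>R\<close> is left hereditary, \<open>N\<close> is itself projective, i.e. a retract of a free module
  \<open>R\<^bsup>(I)\<^esup>\<close> via \<open>i : N \<rightarrow> R\<^bsup>(I)\<^esup>\<close> and \<open>p : R\<^bsup>(I)\<^esup> \<rightarrow> N\<close>.  If a coordinate \<open>c\<close> of \<open>i x\<close> is not
  nilpotent, Zorn's lemma gives a prime ideal \<open>Q\<close> avoiding the powers of \<open>c\<close>, and the elements of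
  \<open>N\<close> all of whose coordinates lie in \<open>Q\<close> form a prime submodule missing \<open>x\<close>.  Hence every
  \<open>x \<in> \<beta>(N)\<close> has nilpotent coordinates \<open>c\<^sub>j\<close>, and \<open>x = p (i x) = \<Sum> c\<^sub>j p(e\<^sub>j)\<close> is a sum of elements of
  \<open>E\<^sub>N(0)\<close>.  Conversely a completely prime submodule containing \<open>r\<^sup>k x = 0\<close> contains \<open>x\<close> or \<open>rN\<close>,
  hence \<open>rx\<close>.\<close>

text \<open>Prime ideals of a not necessarily commutative ring (HOL-Algebra's \<open>primeideal\<close> assumes
  commutativity).\<close>

definition prime_ideal :: "('a, 'b) ring_scheme \<Rightarrow> 'a set \<Rightarrow> bool" where
  "prime_ideal R Q \<longleftrightarrow> ideal Q R \<and> Q \<noteq> carrier R \<and>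
     (\<forall>a \<in> carrier R. \<forall>b \<in> carrier R.
        (\<forall>r \<in> carrier R. a \<otimes>\<^bsub>R\<^esub> r \<otimes>\<^bsub>R\<^esub> b \<in> Q) \<longrightarrow> a \<in> Q \<or> b \<in> Q)"

context ring
begin

lemma idealI_closed:
  assumes "I \<subseteq> carrier R" "\<zero> \<in> I"
    and "\<And>a b. a \<in> I \<Longrightarrow> b \<in> I \<Longrightarrow> a \<oplus> b \<in> I"
    and "\<And>a. a \<in> I \<Longrightarrow> \<ominus> a \<in> I"
    and "\<And>a x. a \<in> I \<Longrightarrow> x \<in> carrier R \<Longrightarrow> x \<otimes> a \<in> I"
    and "\<And>a x. a \<in> I \<Longrightarrow> x \<in> carrier R \<Longrightarrow> a \<otimes> x \<in> I"
  shows "ideal I R"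
  by (rule idealI[OF ring_axioms add.subgroupI]) (use assms in \<open>auto simp: a_inv_def\<close>)

lemma ideal_right_residual:
  assumes "ideal Q R" "a \<in> carrier R"
  shows "ideal {w \<in> carrier R. \<forall>r \<in> carrier R. a \<otimes> r \<otimes> w \<in> Q} R"
proof (rule idealI_closed)
  interpret Q: ideal Q R by fact
  show "\<zero> \<in> {w \<in> carrier R. \<forall>r \<in> carrier R. a \<otimes> r \<otimes> w \<in> Q}"
    using assms(2) by simp
  fix u v x
  assume u: "u \<in> {w \<in> carrier R. \<forall>r \<in> carrier R. a \<otimes> r \<otimes> w \<in> Q}"
  then show "\<ominus> u \<in> {w \<in> carrier R. \<forall>r \<in> carrier R. a \<otimes> r \<otimes> w \<in> Q}"
    using assms(2) by (simp add: r_minus)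
  show "v \<in> {w \<in> carrier R. \<forall>r \<in> carrier R. a \<otimes> r \<otimes> w \<in> Q} \<Longrightarrow>
      u \<oplus> v \<in> {w \<in> carrier R. \<forall>r \<in> carrier R. a \<otimes> r \<otimes> w \<in> Q}"
    using u assms(2) by (simp add: r_distr)
  assume x: "x \<in> carrier R"
  show "u \<otimes> x \<in> {w \<in> carrier R. \<forall>r \<in> carrier R. a \<otimes> r \<otimes> w \<in> Q}"
    using u x assms(2) by (simp add: m_assoc[symmetric] Q.I_r_closed)
  have "a \<otimes> r \<otimes> (x \<otimes> u) = a \<otimes> (r \<otimes> x) \<otimes> u" if "r \<in> carrier R" for r
    using u x that assms(2) by (simp add: m_assoc)
  then show "x \<otimes> u \<in> {w \<in> carrier R. \<forall>r \<in> carrier R. a \<otimes> r \<otimes> w \<in> Q}"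
    using u x by simp
qed auto

lemma ideal_left_residual:
  assumes "ideal Q R" "b \<in> carrier R"
  shows "ideal {z \<in> carrier R. \<forall>r \<in> carrier R. z \<otimes> r \<otimes> b \<in> Q} R"
proof (rule idealI_closed)
  interpret Q: ideal Q R by fact
  show "\<zero> \<in> {z \<in> carrier R. \<forall>r \<in> carrier R. z \<otimes> r \<otimes> b \<in> Q}"
    using assms(2) by simp
  fix u v x
  assume u: "u \<in> {z \<in> carrier R. \<forall>r \<in> carrier R. z \<otimes> r \<otimes> b \<in> Q}"
  then show "\<ominus> u \<in> {z \<in> carrier R. \<forall>r \<in> carrier R. z \<otimes> r \<otimes> b \<in> Q}"
    using assms(2) by (simp add: l_minus)
  show "v \<in> {z \<in> carrier R. \<forall>r \<in> carrier R. z \<otimes> r \<otimes> b \<in> Q} \<Longrightarrow>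
      u \<oplus> v \<in> {z \<in> carrier R. \<forall>r \<in> carrier R. z \<otimes> r \<otimes> b \<in> Q}"
    using u assms(2) by (simp add: l_distr)
  assume x: "x \<in> carrier R"
  have "x \<otimes> u \<otimes> r \<otimes> b = x \<otimes> (u \<otimes> r \<otimes> b)" if "r \<in> carrier R" for r
    using u x that assms(2) by (simp add: m_assoc)
  then show "x \<otimes> u \<in> {z \<in> carrier R. \<forall>r \<in> carrier R. z \<otimes> r \<otimes> b \<in> Q}"
    using u x by (simp add: Q.I_l_closed)
  have "u \<otimes> x \<otimes> r \<otimes> b = u \<otimes> (x \<otimes> r) \<otimes> b" if "r \<in> carrier R" for r
    using u x that assms(2) by (simp add: m_assoc)
  then show "u \<otimes> x \<in> {z \<in> carrier R. \<forall>r \<in> carrier R. z \<otimes> r \<otimes> b \<in> Q}"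
    using u x by simp
qed auto

lemma exists_maximal_ideal_avoiding_powers:
  assumes "\<forall>n::nat. c [^] n \<noteq> \<zero>"
  obtains Q where "ideal Q R" "\<forall>n::nat. c [^] n \<notin> Q"
    "\<And>J. ideal J R \<Longrightarrow> Q \<subset> J \<Longrightarrow> \<exists>n::nat. c [^] n \<in> J"
proof -
  define \<A> where "\<A> = {Q. ideal Q R \<and> (\<forall>n::nat. c [^] n \<notin> Q)}"
  have "\<exists>Q \<in> \<A>. \<forall>J \<in> \<A>. Q \<subseteq> J \<longrightarrow> J = Q"
  proof (rule subset_Zorn_nonempty)
    show "\<A> \<noteq> {}"
      using zeroideal assms by (auto simp: \<A>_def)
    fix C assume C: "C \<noteq> {}" "subset.chain \<A> C"
    then have "subset.chain {I. ideal I R} C"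
      by (auto simp: \<A>_def subset.chain_def)
    from chain_Union_is_ideal[OF this] have "ideal (\<Union>C) R"
      using C(1) by simp
    with C(2) show "\<Union>C \<in> \<A>"
      by (auto simp: \<A>_def subset.chain_def)
  qed
  then obtain Q where "Q \<in> \<A>" and "\<forall>J \<in> \<A>. Q \<subseteq> J \<longrightarrow> J = Q"
    by blast
  then show thesis
    by (intro that) (auto simp: \<A>_def)
qed

text \<open>A maximal ideal avoiding the powers of \<open>c\<close> is prime: if \<open>aRb \<subseteq> Q\<close> with
  \<open>a, b \<notin> Q\<close>, the residual \<open>{w. aRw \<subseteq> Q}\<close> strictly contains \<open>Q\<close>, hence contains some
  \<open>c\<^sup>n\<close>; then \<open>{z. zRc\<^sup>n \<subseteq> Q}\<close> strictly contains \<open>Q\<close> as well and yields \<open>c\<^sup>m\<^sup>+\<^sup>n \<in> Q\<close>.\<close>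

lemma exists_prime_ideal_avoiding_powers:
  assumes c: "c \<in> carrier R" and "\<forall>n::nat. c [^] n \<noteq> \<zero>"
  obtains Q where "prime_ideal R Q" "\<forall>n::nat. c [^] n \<notin> Q"
proof -
  obtain Q where Q: "ideal Q R" and avoid: "\<forall>n::nat. c [^] n \<notin> Q"
    and maximal: "\<And>J. ideal J R \<Longrightarrow> Q \<subset> J \<Longrightarrow> \<exists>n::nat. c [^] n \<in> J"
    using exists_maximal_ideal_avoiding_powers assms(2) by blast
  interpret Q: ideal Q R by (fact Q)
  have "a \<in> Q \<or> b \<in> Q"
    if a: "a \<in> carrier R" and b: "b \<in> carrier R" and aRb: "\<forall>r \<in> carrier R. a \<otimes> r \<otimes> b \<in> Q" for a b
  proof (rule ccontr)
    assume "\<not> (a \<in> Q \<or> b \<in> Q)"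
    then have "a \<notin> Q" "b \<notin> Q" by auto
    define T where "T = {w \<in> carrier R. \<forall>r \<in> carrier R. a \<otimes> r \<otimes> w \<in> Q}"
    have "Q \<subseteq> T"
      using a by (auto simp: T_def Q.I_l_closed)
    moreover have "b \<in> T"
      using aRb b by (simp add: T_def)
    ultimately have "Q \<subset> T"
      using \<open>b \<notin> Q\<close> by blast
    moreover have "ideal T R"
      unfolding T_def by (rule ideal_right_residual[OF Q a])
    ultimately obtain n :: nat where n: "c [^] n \<in> T"
      using maximal by blast
    define U where "U = {z \<in> carrier R. \<forall>r \<in> carrier R. z \<otimes> r \<otimes> c [^] n \<in> Q}"
    have "Q \<subseteq> U"
      using c by (auto simp: U_def Q.I_r_closed)
    moreover have "a \<in> U"
      using n a by (simp add: T_def U_def)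
    ultimately have "Q \<subset> U"
      using \<open>a \<notin> Q\<close> by blast
    moreover have "ideal U R"
      unfolding U_def by (rule ideal_left_residual[OF Q nat_pow_closed[OF c]])
    ultimately obtain m :: nat where "c [^] m \<in> U"
      using maximal by blast
    then have "c [^] m \<otimes> \<one> \<otimes> c [^] n \<in> Q"
      unfolding U_def using one_closed by blast
    then have "c [^] (m + n) \<in> Q"
      using c by (simp add: nat_pow_mult)
    with avoid show False by blast
  qed
  moreover have "Q \<noteq> carrier R"
    using avoid nat_pow_closed[OF c, of 0] by blast
  ultimately have "prime_ideal R Q"
    using Q by (simp add: prime_ideal_def)
  then show thesis
    using avoid by (rule that)
qed

end

lemma lmoduleD:
  assumes "lmodule R Y"
  shows lmodule_ring: "ring R"
    and lmodule_abelian_group: "abelian_group Y"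
    and lmodule_smult_closed: "\<And>a x. a \<in> carrier R \<Longrightarrow> x \<in> carrier Y \<Longrightarrow> a \<odot>\<^bsub>Y\<^esub> x \<in> carrier Y"
    and lmodule_smult_l_distr: "\<And>a b x. a \<in> carrier R \<Longrightarrow> b \<in> carrier R \<Longrightarrow> x \<in> carrier Y \<Longrightarrow>
        (a \<oplus>\<^bsub>R\<^esub> b) \<odot>\<^bsub>Y\<^esub> x = a \<odot>\<^bsub>Y\<^esub> x \<oplus>\<^bsub>Y\<^esub> b \<odot>\<^bsub>Y\<^esub> x"
    and lmodule_smult_assoc: "\<And>a b x. a \<in> carrier R \<Longrightarrow> b \<in> carrier R \<Longrightarrow> x \<in> carrier Y \<Longrightarrow>
        (a \<otimes>\<^bsub>R\<^esub> b) \<odot>\<^bsub>Y\<^esub> x = a \<odot>\<^bsub>Y\<^esub> (b \<odot>\<^bsub>Y\<^esub> x)"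
    and lmodule_smult_one: "\<And>x. x \<in> carrier Y \<Longrightarrow> \<one>\<^bsub>R\<^esub> \<odot>\<^bsub>Y\<^esub> x = x"
  using assms unfolding lmodule_def by auto

lemma lmodule_zero_smult:
  assumes Y: "lmodule R Y" and x: "x \<in> carrier Y"
  shows "\<zero>\<^bsub>R\<^esub> \<odot>\<^bsub>Y\<^esub> x = \<zero>\<^bsub>Y\<^esub>"
proof -
  interpret R: ring R by (rule lmodule_ring[OF Y])
  interpret Y: abelian_group Y by (rule lmodule_abelian_group[OF Y])
  have zx: "\<zero>\<^bsub>R\<^esub> \<odot>\<^bsub>Y\<^esub> x \<in> carrier Y"
    using lmodule_smult_closed[OF Y] x by simp
  have "\<zero>\<^bsub>R\<^esub> \<odot>\<^bsub>Y\<^esub> x \<oplus>\<^bsub>Y\<^esub> \<zero>\<^bsub>R\<^esub> \<odot>\<^bsub>Y\<^esub> x = (\<zero>\<^bsub>R\<^esub> \<oplus>\<^bsub>R\<^esub> \<zero>\<^bsub>R\<^esub>) \<odot>\<^bsub>Y\<^esub> x"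
    by (rule lmodule_smult_l_distr[OF Y R.zero_closed R.zero_closed x, symmetric])
  also have "\<dots> = \<zero>\<^bsub>R\<^esub> \<odot>\<^bsub>Y\<^esub> x \<oplus>\<^bsub>Y\<^esub> \<zero>\<^bsub>Y\<^esub>"
    using zx by simp
  finally show ?thesis
    using zx by simp
qed

lemma lmodule_minus_smult:
  assumes Y: "lmodule R Y" and x: "x \<in> carrier Y"
  shows "\<ominus>\<^bsub>Y\<^esub> x = (\<ominus>\<^bsub>R\<^esub> \<one>\<^bsub>R\<^esub>) \<odot>\<^bsub>Y\<^esub> x"
proof -
  interpret R: ring R by (rule lmodule_ring[OF Y])
  interpret Y: abelian_group Y by (rule lmodule_abelian_group[OF Y])
  have "(\<ominus>\<^bsub>R\<^esub> \<one>\<^bsub>R\<^esub>) \<odot>\<^bsub>Y\<^esub> x \<oplus>\<^bsub>Y\<^esub> x = (\<ominus>\<^bsub>R\<^esub> \<one>\<^bsub>R\<^esub> \<oplus>\<^bsub>R\<^esub> \<one>\<^bsub>R\<^esub>) \<odot>\<^bsub>Y\<^esub> x"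
    using lmodule_smult_l_distr[OF Y] lmodule_smult_one[OF Y] x by simp
  also have "\<dots> = \<zero>\<^bsub>Y\<^esub>"
    using lmodule_zero_smult[OF Y x] by (simp add: R.l_neg)
  finally show ?thesis
    using lmodule_smult_closed[OF Y] x by (intro Y.minus_equality) auto
qed

lemma lsubmoduleI:
  assumes Y: "lmodule R Y" and "P \<subseteq> carrier Y" "\<zero>\<^bsub>Y\<^esub> \<in> P"
    and "\<And>x y. x \<in> P \<Longrightarrow> y \<in> P \<Longrightarrow> x \<oplus>\<^bsub>Y\<^esub> y \<in> P"
    and "\<And>a x. a \<in> carrier R \<Longrightarrow> x \<in> P \<Longrightarrow> a \<odot>\<^bsub>Y\<^esub> x \<in> P"
  shows "lsubmodule R P Y"
proof -
  interpret R: ring R by (rule lmodule_ring[OF Y])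
  have "\<ominus>\<^bsub>Y\<^esub> x \<in> P" if "x \<in> P" for x
    using that assms lmodule_minus_smult[OF Y] by auto
  then show ?thesis
    using assms by (simp add: lsubmodule_def)
qed

lemma lmodule_carrier_lsubmodule:
  assumes Y: "lmodule R Y"
  shows "lsubmodule R (carrier Y) Y"
proof -
  interpret Y: abelian_group Y by (rule lmodule_abelian_group[OF Y])
  show ?thesis
    using lmodule_smult_closed[OF Y] by (intro lsubmoduleI[OF Y]) auto
qed

lemma lmodule_restrict:
  assumes M: "lmodule R M" and N: "lsubmodule R N M"
  shows "lmodule R (M\<lparr>carrier := N\<rparr>)"
proof -
  interpret M: abelian_group M by (rule lmodule_abelian_group[OF M])
  have NM: "N \<subseteq> carrier M"
    using N by (simp add: lsubmodule_def)
  have "abelian_group (M\<lparr>carrier := N\<rparr>)"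
  proof (rule abelian_groupI)
    show "\<exists>y \<in> carrier (M\<lparr>carrier := N\<rparr>). y \<oplus>\<^bsub>M\<lparr>carrier := N\<rparr>\<^esub> x = \<zero>\<^bsub>M\<lparr>carrier := N\<rparr>\<^esub>"
      if "x \<in> carrier (M\<lparr>carrier := N\<rparr>)" for x
      using that N NM by (auto simp: lsubmodule_def intro!: bexI[of _ "\<ominus>\<^bsub>M\<^esub> x"] M.l_neg)
  qed (use N NM in \<open>auto simp: lsubmodule_def subset_iff M.a_ac\<close>)
  then show ?thesis
    using M N NM by (auto simp: lmodule_def lsubmodule_def subset_iff)
qed

lemma gen_submodule_lsubmodule:
  assumes Y: "lmodule R Y" and S: "S \<subseteq> carrier Y"
  shows "lsubmodule R (gen_submodule R Y S) Y"
proof -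
  have "gen_submodule R Y S \<subseteq> carrier Y"
    using lmodule_carrier_lsubmodule[OF Y] S by (auto simp: gen_submodule_def)
  then show ?thesis
    by (auto simp: lsubmodule_def gen_submodule_def)
qed

lemma gen_submodule_incl: "S \<subseteq> gen_submodule R Y S"
  by (auto simp: gen_submodule_def)

lemma gen_submodule_minimal: "lsubmodule R K Y \<Longrightarrow> S \<subseteq> K \<Longrightarrow> gen_submodule R Y S \<subseteq> K"
  by (auto simp: gen_submodule_def)

lemma E_zero_subset_carrier:
  assumes Y: "lmodule R Y"
  shows "E_zero R Y \<subseteq> carrier Y"
  using lmodule_smult_closed[OF Y] by (auto simp: E_zero_def)

lemma smult_nilpotent_in_E_zero:
  assumes Y: "lmodule R Y" and "r \<in> carrier R" "y \<in> carrier Y" "r [^]\<^bsub>R\<^esub> (k::nat) = \<zero>\<^bsub>R\<^esub>"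
  shows "r \<odot>\<^bsub>Y\<^esub> y \<in> E_zero R Y"
proof -
  have "(r [^]\<^bsub>R\<^esub> k) \<odot>\<^bsub>Y\<^esub> y = \<zero>\<^bsub>Y\<^esub>"
    using assms lmodule_zero_smult[OF Y] by simp
  then show ?thesis
    using assms unfolding E_zero_def by blast
qed

lemma E_zero_subset_completely_prime:
  assumes Y: "lmodule R Y" and P: "completely_prime_submodule R Y P"
  shows "E_zero R Y \<subseteq> P"
proof
  interpret R: ring R by (rule lmodule_ring[OF Y])
  have P_sub: "lsubmodule R P Y"
    and P_cp: "\<And>r x. r \<in> carrier R \<Longrightarrow> x \<in> carrier Y \<Longrightarrow> r \<odot>\<^bsub>Y\<^esub> x \<in> P \<Longrightarrow>
                   x \<in> P \<or> smult_set Y {r} (carrier Y) \<subseteq> P"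
    using P by (auto simp: completely_prime_submodule_def)
  fix z assume "z \<in> E_zero R Y"
  then obtain r x k where z: "z = r \<odot>\<^bsub>Y\<^esub> x" and r: "r \<in> carrier R" and x: "x \<in> carrier Y"
    and k: "(r [^]\<^bsub>R\<^esub> (k::nat)) \<odot>\<^bsub>Y\<^esub> x = \<zero>\<^bsub>Y\<^esub>"
    by (auto simp: E_zero_def)
  have "x \<in> P \<or> smult_set Y {r} (carrier Y) \<subseteq> P"
    if "(r [^]\<^bsub>R\<^esub> (n::nat)) \<odot>\<^bsub>Y\<^esub> x \<in> P" for n
    using that
  proof (induction n)
    case 0
    then show ?case
      using lmodule_smult_one[OF Y x] by simp
  next
    case (Suc n)
    have "r [^]\<^bsub>R\<^esub> Suc n = r \<otimes>\<^bsub>R\<^esub> r [^]\<^bsub>R\<^esub> n"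
      by (rule R.nat_pow_Suc2[OF r])
    then have "r \<odot>\<^bsub>Y\<^esub> ((r [^]\<^bsub>R\<^esub> n) \<odot>\<^bsub>Y\<^esub> x) \<in> P"
      using Suc.prems r x by (simp add: lmodule_smult_assoc[OF Y])
    then show ?case
      using P_cp[OF r lmodule_smult_closed[OF Y _ x]] Suc.IH r by blast
  qed
  moreover have "\<zero>\<^bsub>Y\<^esub> \<in> P"
    using P_sub by (simp add: lsubmodule_def)
  ultimately have "x \<in> P \<or> smult_set Y {r} (carrier Y) \<subseteq> P"
    using k by metis
  moreover have "r \<odot>\<^bsub>Y\<^esub> x \<in> smult_set Y {r} (carrier Y)"
    using x by (auto simp: smult_set_def)
  ultimately show "z \<in> P"
    using P_sub r z by (auto simp: lsubmodule_def)
qed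

lemma gen_E_zero_subset_co_prime_radical:
  assumes Y: "lmodule R Y"
  shows "gen_submodule R Y (E_zero R Y) \<subseteq> co_prime_radical R Y"
proof -
  have "gen_submodule R Y (E_zero R Y) \<subseteq> P" if P: "completely_prime_submodule R Y P" for P
  proof (rule gen_submodule_minimal)
    show "lsubmodule R P Y"
      using P by (simp add: completely_prime_submodule_def)
  qed (rule E_zero_subset_completely_prime[OF Y P])
  moreover have "gen_submodule R Y (E_zero R Y) \<subseteq> carrier Y"
    using gen_submodule_lsubmodule[OF Y E_zero_subset_carrier[OF Y]] by (simp add: lsubmodule_def)
  ultimately show ?thesis
    by (auto simp: co_prime_radical_def)
qed

lemma free_lmod_simps:
  "carrier (free_lmod R I) = {f. (\<forall>i. f i \<in> carrier R) \<and> (\<forall>i. i \<notin> I \<longrightarrow> f i = \<zero>\<^bsub>R\<^esub>)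
                                   \<and> finite {i. f i \<noteq> \<zero>\<^bsub>R\<^esub>}}"
  "f \<oplus>\<^bsub>free_lmod R I\<^esub> g = (\<lambda>i. f i \<oplus>\<^bsub>R\<^esub> g i)"
  "a \<odot>\<^bsub>free_lmod R I\<^esub> f = (\<lambda>i. a \<otimes>\<^bsub>R\<^esub> f i)"
  by (simp_all add: free_lmod_def)

lemma lmod_hom_into_free_lmod:
  assumes "lmod_hom R Y (free_lmod R I) h"
  shows "\<And>y. y \<in> carrier Y \<Longrightarrow> h y \<in> carrier (free_lmod R I)"
    and "\<And>y j. y \<in> carrier Y \<Longrightarrow> h y j \<in> carrier R"
    and "\<And>x y j. x \<in> carrier Y \<Longrightarrow> y \<in> carrier Y \<Longrightarrow> h (x \<oplus>\<^bsub>Y\<^esub> y) j = h x j \<oplus>\<^bsub>R\<^esub> h y j"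
    and "\<And>a y j. a \<in> carrier R \<Longrightarrow> y \<in> carrier Y \<Longrightarrow> h (a \<odot>\<^bsub>Y\<^esub> y) j = a \<otimes>\<^bsub>R\<^esub> h y j"
  using assms by (auto simp: lmod_hom_def free_lmod_simps)

lemma lmod_hom_from_free_lmod:
  assumes "lmod_hom R (free_lmod R I) Y h"
  shows "\<And>f. f \<in> carrier (free_lmod R I) \<Longrightarrow> h f \<in> carrier Y"
    and "\<And>f g. f \<in> carrier (free_lmod R I) \<Longrightarrow> g \<in> carrier (free_lmod R I) \<Longrightarrow>
           h (\<lambda>i. f i \<oplus>\<^bsub>R\<^esub> g i) = h f \<oplus>\<^bsub>Y\<^esub> h g"
    and "\<And>a f. a \<in> carrier R \<Longrightarrow> f \<in> carrier (free_lmod R I) \<Longrightarrow>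
           h (\<lambda>i. a \<otimes>\<^bsub>R\<^esub> f i) = a \<odot>\<^bsub>Y\<^esub> h f"
  using assms by (auto simp: lmod_hom_def free_lmod_simps)

lemma prime_radical_subset_prime_submodule:
  "prime_submodule R Y P \<Longrightarrow> prime_radical R Y \<subseteq> P"
  by (auto simp: prime_radical_def)

lemma prime_radical_subset_carrier: "prime_radical R Y \<subseteq> carrier Y"
  by (auto simp: prime_radical_def prime_submodule_def lsubmodule_def)

lemma lsubmodule_coordinate_preimage:
  assumes Y: "lmodule R Y" and h: "lmod_hom R Y (free_lmod R I) h" and Q: "ideal Q R"
  shows "lsubmodule R {y \<in> carrier Y. \<forall>j. h y j \<in> Q} Y"
proof -
  interpret R: ring R by (rule lmodule_ring[OF Y])
  interpret Y: abelian_group Y by (rule lmodule_abelian_group[OF Y])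
  interpret Q: ideal Q R by (rule Q)
  note h_coord = lmod_hom_into_free_lmod(2)[OF h]
  show ?thesis
  proof (rule lsubmoduleI[OF Y])
    have "h \<zero>\<^bsub>Y\<^esub> j = \<zero>\<^bsub>R\<^esub> \<otimes>\<^bsub>R\<^esub> h \<zero>\<^bsub>Y\<^esub> j" for j
      using lmod_hom_into_free_lmod(4)[OF h R.zero_closed Y.zero_closed]
        lmodule_zero_smult[OF Y Y.zero_closed] by simp
    then show "\<zero>\<^bsub>Y\<^esub> \<in> {y \<in> carrier Y. \<forall>j. h y j \<in> Q}"
      using h_coord by simp
  qed (auto simp: lmod_hom_into_free_lmod(3,4)[OF h] h_coord lmodule_smult_closed[OF Y] Q.I_l_closed)
qed

lemma prime_submodule_coordinate_preimage:
  assumes Y: "lmodule R Y" and h: "lmod_hom R Y (free_lmod R I) h" and Q: "prime_ideal R Q"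
    and x: "x \<in> carrier Y" "h x j \<notin> Q"
  shows "prime_submodule R Y {y \<in> carrier Y. \<forall>j. h y j \<in> Q}"
    (is "prime_submodule R Y ?P")
proof -
  interpret R: ring R by (rule lmodule_ring[OF Y])
  interpret Q: ideal Q R
    using Q by (simp add: prime_ideal_def)
  note h_coord = lmod_hom_into_free_lmod(2)[OF h]
    and h_smult = lmod_hom_into_free_lmod(4)[OF h]
  have Q_prime: "\<And>a b. a \<in> carrier R \<Longrightarrow> b \<in> carrier R \<Longrightarrow>
      (\<forall>r \<in> carrier R. a \<otimes>\<^bsub>R\<^esub> r \<otimes>\<^bsub>R\<^esub> b \<in> Q) \<Longrightarrow> a \<in> Q \<or> b \<in> Q"
    using Q by (simp add: prime_ideal_def)
  have P_sub: "lsubmodule R ?P Y"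
    by (rule lsubmodule_coordinate_preimage[OF Y h Q.is_ideal])
  have x_notin: "x \<notin> ?P"
    using x by blast
  moreover have "\<not> smult_set Y (carrier R) (carrier Y) \<subseteq> ?P"
  proof -
    have "\<one>\<^bsub>R\<^esub> \<odot>\<^bsub>Y\<^esub> x \<in> smult_set Y (carrier R) (carrier Y)"
      using x by (auto simp: smult_set_def)
    then show ?thesis
      using x_notin lmodule_smult_one[OF Y x(1)] by auto
  qed
  moreover have "K \<subseteq> ?P \<or> smult_set Y A (carrier Y) \<subseteq> ?P"
    if A: "ideal A R" and K: "lsubmodule R K Y" and AK: "smult_set Y A K \<subseteq> ?P" for A K
  proof (cases "K \<subseteq> ?P")
    case False
    then obtain k l where k: "k \<in> K" "k \<in> carrier Y" and "h k l \<notin> Q"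
      using K by (auto simp: lsubmodule_def)
    have "A \<subseteq> Q"
    proof
      fix a assume a: "a \<in> A"
      have aR: "a \<in> carrier R"
        using ideal.Icarr[OF A a] .
      have "a \<otimes>\<^bsub>R\<^esub> r \<otimes>\<^bsub>R\<^esub> h k l \<in> Q" if r: "r \<in> carrier R" for r
      proof -
        have "r \<odot>\<^bsub>Y\<^esub> k \<in> K"
          using K r k by (simp add: lsubmodule_def)
        then have "a \<odot>\<^bsub>Y\<^esub> (r \<odot>\<^bsub>Y\<^esub> k) \<in> ?P"
          using AK a by (auto simp: smult_set_def)
        then show ?thesis
          using aR r k h_coord by (simp add: h_smult lmodule_smult_closed[OF Y] R.m_assoc)
      qed
      then show "a \<in> Q"
        using Q_prime aR h_coord k \<open>h k l \<notin> Q\<close> by blast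
    qed
    then have "smult_set Y A (carrier Y) \<subseteq> ?P"
      by (auto simp: smult_set_def h_smult lmodule_smult_closed[OF Y] h_coord Q.I_r_closed
               dest: ideal.Icarr[OF A])
    then show ?thesis ..
  qed simp
  ultimately show ?thesis
    using P_sub by (simp add: prime_submodule_def)
qed

lemma prime_radical_coordinates_nilpotent:
  assumes Y: "lmodule R Y" and h: "lmod_hom R Y (free_lmod R I) h"
    and x: "x \<in> prime_radical R Y"
  shows "\<exists>k::nat. h x j [^]\<^bsub>R\<^esub> k = \<zero>\<^bsub>R\<^esub>"
proof (rule ccontr)
  interpret R: ring R by (rule lmodule_ring[OF Y])
  have xY: "x \<in> carrier Y"
    by (rule subsetD[OF prime_radical_subset_carrier x])
  have c: "h x j \<in> carrier R"
    using lmod_hom_into_free_lmod(2)[OF h xY] .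
  assume "\<not> (\<exists>k::nat. h x j [^]\<^bsub>R\<^esub> k = \<zero>\<^bsub>R\<^esub>)"
  then obtain Q where Q: "prime_ideal R Q" and avoid: "\<forall>n::nat. h x j [^]\<^bsub>R\<^esub> n \<notin> Q"
    using R.exists_prime_ideal_avoiding_powers[OF c] by blast
  have "h x j \<notin> Q"
    using avoid[rule_format, of 1] c by simp
  then have "prime_submodule R Y {y \<in> carrier Y. \<forall>j. h y j \<in> Q}"
    by (rule prime_submodule_coordinate_preimage[OF Y h Q xY])
  with x \<open>h x j \<notin> Q\<close> show False
    using prime_radical_subset_prime_submodule by blast
qed

lemma nilpotent_coordinates_image_in_gen_E_zero:
  assumes Y: "lmodule R Y" and h: "lmod_hom R (free_lmod R I) Y h"
    and f: "f \<in> carrier (free_lmod R I)" and nil: "\<forall>j. \<exists>k::nat. f j [^]\<^bsub>R\<^esub> k = \<zero>\<^bsub>R\<^esub>"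
  shows "h f \<in> gen_submodule R Y (E_zero R Y)"
proof -
  interpret R: ring R by (rule lmodule_ring[OF Y])
  define G where "G = gen_submodule R Y (E_zero R Y)"
  have G_sub: "lsubmodule R G Y"
    unfolding G_def by (rule gen_submodule_lsubmodule[OF Y E_zero_subset_carrier[OF Y]])
  note h_closed = lmod_hom_from_free_lmod(1)[OF h]
    and h_add = lmod_hom_from_free_lmod(2)[OF h]
    and h_smult = lmod_hom_from_free_lmod(3)[OF h]
  have support_induct: "\<forall>f \<in> carrier (free_lmod R I). {j. f j \<noteq> \<zero>\<^bsub>R\<^esub>} = D \<longrightarrow>
          (\<forall>j. \<exists>k::nat. f j [^]\<^bsub>R\<^esub> k = \<zero>\<^bsub>R\<^esub>) \<longrightarrow> h f \<in> G"
    if "finite D" for D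
    using that
  proof (induction D rule: finite_induct)
    case empty
    show ?case
    proof (intro ballI impI)
      fix f assume f: "f \<in> carrier (free_lmod R I)" "{j. f j \<noteq> \<zero>\<^bsub>R\<^esub>} = {}"
      then have "f = (\<lambda>i. \<zero>\<^bsub>R\<^esub> \<otimes>\<^bsub>R\<^esub> f i)"
        by (auto simp: free_lmod_simps)
      then have "h f = \<zero>\<^bsub>R\<^esub> \<odot>\<^bsub>Y\<^esub> h f"
        using h_smult[OF R.zero_closed f(1)] by simp
      also have "\<dots> = \<zero>\<^bsub>Y\<^esub>"
        by (rule lmodule_zero_smult[OF Y h_closed[OF f(1)]])
      finally show "h f \<in> G"
        using G_sub by (simp add: lsubmodule_def)
    qed
  next
    case (insert j D)
    show ?case
    proof (intro ballI impI)
      fix f assume f: "f \<in> carrier (free_lmod R I)" and supp: "{i. f i \<noteq> \<zero>\<^bsub>R\<^esub>} = insert j D"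
        and nil: "\<forall>j. \<exists>k::nat. f j [^]\<^bsub>R\<^esub> k = \<zero>\<^bsub>R\<^esub>"
      define f' where "f' = f(j := \<zero>\<^bsub>R\<^esub>)"
      define e where "e = (\<lambda>i. if i = j then \<one>\<^bsub>R\<^esub> else \<zero>\<^bsub>R\<^esub>)"
      have fj: "f j \<in> carrier R" "j \<in> I"
        using f supp by (auto simp: free_lmod_simps)
      have supp': "{i. f' i \<noteq> \<zero>\<^bsub>R\<^esub>} = D"
        using supp insert.hyps(2) by (auto simp: f'_def)
      have f': "f' \<in> carrier (free_lmod R I)"
        using f supp' insert.hyps(1) by (auto simp: free_lmod_simps f'_def)
      have "\<exists>k::nat. f' i [^]\<^bsub>R\<^esub> k = \<zero>\<^bsub>R\<^esub>" for i
      proof (cases "i = j")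
        case True
        then have "f' i [^]\<^bsub>R\<^esub> (1::nat) = \<zero>\<^bsub>R\<^esub>"
          by (simp add: f'_def)
        then show ?thesis ..
      qed (use nil in \<open>simp add: f'_def\<close>)
      then have "h f' \<in> G"
        using insert.IH f' supp' by blast
      moreover
      have "{i. e i \<noteq> \<zero>\<^bsub>R\<^esub>} \<subseteq> {j}" "{i. f j \<otimes>\<^bsub>R\<^esub> e i \<noteq> \<zero>\<^bsub>R\<^esub>} \<subseteq> {j}"
        using fj by (auto simp: e_def)
      then have "finite {i. e i \<noteq> \<zero>\<^bsub>R\<^esub>}" "finite {i. f j \<otimes>\<^bsub>R\<^esub> e i \<noteq> \<zero>\<^bsub>R\<^esub>}"
        by (auto intro: finite_subset)
      then have e: "e \<in> carrier (free_lmod R I)"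
        and fj_e: "(\<lambda>i. f j \<otimes>\<^bsub>R\<^esub> e i) \<in> carrier (free_lmod R I)"
        using fj by (simp_all add: free_lmod_simps e_def)
      have "f i = f' i \<oplus>\<^bsub>R\<^esub> f j \<otimes>\<^bsub>R\<^esub> e i" for i
        using f fj by (cases "i = j") (simp_all add: free_lmod_simps f'_def e_def)
      then have "f = (\<lambda>i. f' i \<oplus>\<^bsub>R\<^esub> f j \<otimes>\<^bsub>R\<^esub> e i)" ..
      then have "h f = h f' \<oplus>\<^bsub>Y\<^esub> f j \<odot>\<^bsub>Y\<^esub> h e"
        using h_add[OF f' fj_e] h_smult[OF fj(1) e] by simp
      moreover obtain k :: nat where "f j [^]\<^bsub>R\<^esub> k = \<zero>\<^bsub>R\<^esub>"
        using nil by blast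
      then have "f j \<odot>\<^bsub>Y\<^esub> h e \<in> E_zero R Y"
        by (rule smult_nilpotent_in_E_zero[OF Y fj(1) h_closed[OF e]])
      then have "f j \<odot>\<^bsub>Y\<^esub> h e \<in> G"
        unfolding G_def by (rule subsetD[OF gen_submodule_incl])
      ultimately show "h f \<in> G"
        using G_sub by (simp add: lsubmodule_def)
    qed
  qed
  have "finite {j. f j \<noteq> \<zero>\<^bsub>R\<^esub>}"
    using f by (simp add: free_lmod_simps)
  then have "h f \<in> G"
    using support_induct f nil by blast
  then show ?thesis
    by (simp add: G_def)
qed

lemma projective_prime_radical_subset_gen_E_zero:
  fixes Y :: "('r, 'm) module"
  assumes Y: "lmodule R Y" and "projective R Y"
  shows "prime_radical R Y \<subseteq> gen_submodule R Y (E_zero R Y)"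
proof
  obtain I :: "'m set" and i p where i: "lmod_hom R Y (free_lmod R I) i"
    and p: "lmod_hom R (free_lmod R I) Y p" and retract: "\<forall>x \<in> carrier Y. p (i x) = x"
    using \<open>projective R Y\<close> unfolding projective_def by blast
  fix x assume x: "x \<in> prime_radical R Y"
  then have xY: "x \<in> carrier Y"
    by (rule subsetD[OF prime_radical_subset_carrier])
  have "\<forall>j. \<exists>k::nat. i x j [^]\<^bsub>R\<^esub> k = \<zero>\<^bsub>R\<^esub>"
    using prime_radical_coordinates_nilpotent[OF Y i x] by blast
  then have "p (i x) \<in> gen_submodule R Y (E_zero R Y)"
    by (rule nilpotent_coordinates_image_in_gen_E_zero[OF Y p lmod_hom_into_free_lmod(1)[OF i xY]])
  then show "x \<in> gen_submodule R Y (E_zero R Y)"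
    using retract xY by simp
qed

theorem lemma4p20:
  fixes R :: "'r ring" and M :: "('r, 'm) module" and N :: "'m set"
  assumes "left_hereditary TYPE('m) R"
    and "lmodule R M"
    and "projective R M"
    and "lsubmodule R N M"
  shows "prime_radical R (M\<lparr>carrier := N\<rparr>)
           \<subseteq> gen_submodule R (M\<lparr>carrier := N\<rparr>) (E_zero R (M\<lparr>carrier := N\<rparr>))
       \<and> gen_submodule R (M\<lparr>carrier := N\<rparr>) (E_zero R (M\<lparr>carrier := N\<rparr>))
           \<subseteq> co_prime_radical R (M\<lparr>carrier := N\<rparr>)"
proof
  have N: "lmodule R (M\<lparr>carrier := N\<rparr>)"
    using lmodule_restrict assms(2,4) .
  have "projective R (M\<lparr>carrier := N\<rparr>)"
    using assms unfolding left_hereditary_def by blast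
  then show "prime_radical R (M\<lparr>carrier := N\<rparr>)
           \<subseteq> gen_submodule R (M\<lparr>carrier := N\<rparr>) (E_zero R (M\<lparr>carrier := N\<rparr>))"
    by (rule projective_prime_radical_subset_gen_E_zero[OF N])
  show "gen_submodule R (M\<lparr>carrier := N\<rparr>) (E_zero R (M\<lparr>carrier := N\<rparr>))
           \<subseteq> co_prime_radical R (M\<lparr>carrier := N\<rparr>)"
    by (rule gen_E_zero_subset_co_prime_radical[OF N])
qed

end
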